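(* Let $K\subset\mathbb{R}^n$ be a closed convex set. The map $\sigma\mapsto\overline{\varepsilon_K}(\sigma)$ is non-decreasing on $[0,\infty)$. If $c\ge1$, then $\overline{\varepsilon_K}(\sigma)\le\overline{\varepsilon_K}(c\sigma)\le c\,\overline{\varepsilon_K}(\sigma)$. If $c<1$, then $c\,\overline{\varepsilon_K}(\sigma)\le\overline{\varepsilon_K}(c\sigma)\le\overline{\varepsilon_K}(\sigma)$.
   Context: Local Gaussian width $w_\mu(\varepsilon)=\mathbb{E}\sup_{t\in B(\mu,\varepsilon)\cap K}\langle x,t\rangle$, $x\sim N(0,\mathbb{I}_n)$, $B$ the closed Euclidean ball. For $\sigma\ge0$ and $\mu\in K$, $\varepsilon_\mu(\sigma)=\operatorname{argmax}_{\varepsilon\ge0}[\sigma w_\mu(\varepsilon)-\varepsilon^2/2]$, and $\overline{\varepsilon_K}(\sigma)=\sup_{\mu\in K}\varepsilon_\mu(\sigma)$. *)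

theory Defs
  imports "HOL-Analysis.Analysis"
begin

definition std_gaussian :: "'a::euclidean_space measure" where
  "std_gaussian = density lborel
     (\<lambda>x. ennreal ((2 * pi) powr (- real DIM('a) / 2) * exp (- (norm x)\<^sup>2 / 2)))"

definition local_gw :: "'a::euclidean_space set \<Rightarrow> 'a \<Rightarrow> real \<Rightarrow> real" where
  "local_gw K \<mu> \<epsilon> = integral\<^sup>L std_gaussian (\<lambda>x. SUP t \<in> cball \<mu> \<epsilon> \<inter> K. x \<bullet> t)"

definition eps_mu :: "'a::euclidean_space set \<Rightarrow> 'a \<Rightarrow> real \<Rightarrow> real" where
  "eps_mu K \<mu> \<sigma> = (ARG_MAX (\<lambda>\<epsilon>. \<sigma> * local_gw K \<mu> \<epsilon> - \<epsilon>\<^sup>2 / 2) \<epsilon>. \<epsilon> \<ge> 0)"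

definition eps_bar :: "'a::euclidean_space set \<Rightarrow> real \<Rightarrow> real" where
  "eps_bar K \<sigma> = (SUP \<mu> \<in> K. eps_mu K \<mu> \<sigma>)"

end

(*
  For fixed \<mu>, the width w(\<epsilon>) = local_gw K \<mu> \<epsilon> is concave in \<epsilon> (a convex combination of
  points of K in two balls around \<mu> lies in K and in the interpolated ball), nondecreasing, and
  Lipschitz with constant E|x|.  Hence \<sigma> w(\<epsilon>) - \<epsilon>^2/2 is strictly concave and coercive,
  and \<epsilon>_\<mu>(\<sigma>) is its unique maximiser.  Since w is nondecreasing, this objective has
  increasing differences in (\<sigma>, \<epsilon>), so \<epsilon>_\<mu> is nondecreasing.  Substituting \<epsilon> = \<sigma> t
  turns it into \<sigma>^2 (w(\<sigma> t)/\<sigma> - t^2/2), which has decreasing differences in (\<sigma>, t)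
  because chord slopes of w decrease; so \<epsilon>_\<mu>(\<sigma>)/\<sigma> is nonincreasing.  Both
  monotonicity properties pass to the supremum over \<mu> in K.
*)
theory Submission
  imports Defs "HOL-Probability.Probability"
begin

lemma lipschitz_on_monoI:
  fixes g :: "real \<Rightarrow> real"
  assumes "mono_on S g" "0 \<le> L" "\<And>a b. a \<in> S \<Longrightarrow> b \<in> S \<Longrightarrow> a \<le> b \<Longrightarrow> g b \<le> g a + (b - a) * L"
  shows "L-lipschitz_on S g"
proof (rule lipschitz_onI)
  have increment: "dist (g a) (g b) \<le> L * dist a b" if "a \<in> S" "b \<in> S" "a \<le> b" for a b
    using assms(3)[OF that] mono_onD[OF assms(1) that] that(3)
    by (simp add: dist_real_def mult.commute)
  show "dist (g a) (g b) \<le> L * dist a b" if "a \<in> S" "b \<in> S" for a b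
    using increment[OF that] increment[OF that(2,1)] by (cases "a \<le> b") (simp_all add: dist_commute)
qed (rule assms(2))

lemma is_arg_max_le_if_increasing_differences:
  fixes f h :: "'a::linorder \<Rightarrow> 'b::linordered_ab_group_add"
  assumes "is_arg_max f P a" "is_arg_max h P b"
    and unique: "\<And>x. is_arg_max f P x \<Longrightarrow> x = a"
    and increasing: "\<And>x y. P x \<Longrightarrow> P y \<Longrightarrow> x \<le> y \<Longrightarrow> f y - f x \<le> h y - h x"
  shows "a \<le> b"
proof (rule ccontr)
  assume "\<not> a \<le> b"
  have "P a" "P b" "\<forall>y. P y \<longrightarrow> f y \<le> f a" "h a \<le> h b"
    using assms(1,2) by (auto simp: is_arg_max_linorder)
  moreover have "f a - f b \<le> h a - h b"
    using increasing \<open>P a\<close> \<open>P b\<close> \<open>\<not> a \<le> b\<close> by simp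
  ultimately have "f a \<le> f b"
    by (meson diff_le_0_iff_le order_trans)
  with \<open>P b\<close> \<open>\<forall>y. P y \<longrightarrow> f y \<le> f a\<close> have "is_arg_max f P b"
    by (auto simp: is_arg_max_linorder)
  with unique \<open>\<not> a \<le> b\<close> show False
    by auto
qed

lemma concave_on_slope_antimono:
  fixes g :: "real \<Rightarrow> real"
  assumes "concave_on I g" "u1 \<in> I" "v2 \<in> I" "u1 < u2" "u2 \<le> v2" "u1 \<le> v1" "v1 < v2"
  shows "(g v2 - g v1) / (v2 - v1) \<le> (g u2 - g u1) / (u2 - u1)"
proof -
  have convex: "convex_on I (\<lambda>x. - g x)"
    using assms(1) by (simp add: concave_on_def)
  have flip: "x / (p - q) = - (x / (q - p))" for x p q :: real
    by (metis divide_minus_right minus_diff_eq)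
  have "(g v2 - g v1) / (v2 - v1) \<le> (g v2 - g u1) / (v2 - u1)"
  proof (cases "u1 = v1")
    case False
    then show ?thesis
      using convex_on_slope_le(2)[OF convex assms(2,3), of v1] assms(6,7)
      by (simp add: flip[of _ u1] flip[of _ v1])
  qed simp
  also have "\<dots> \<le> (g u2 - g u1) / (u2 - u1)"
  proof (cases "u2 = v2")
    case False
    then show ?thesis
      using convex_on_slope_le(1)[OF convex assms(2,3), of u2] assms(4,5)
      by (simp add: flip[of _ u1])
  qed simp
  finally show ?thesis .
qed

lemma integrable_lborel_gaussian_norm:
  "integrable (lborel::'a::euclidean_space measure) (\<lambda>x. exp (- (norm x)\<^sup>2 / 2) * norm x)"
proof -
  define f where "f = (\<lambda>t::real. exp (- t\<^sup>2 / 2) * (1 + \<bar>t\<bar>))"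
  have f_nonneg: "0 \<le> f t" for t
    unfolding f_def by simp
  have "integrable lborel (\<lambda>t. sqrt (2 * pi) *
      (std_normal_density t * \<bar>t\<bar> ^ 0 + std_normal_density t * \<bar>t\<bar> ^ 1))"
    using integrable_std_normal_moment_abs[of 0] integrable_std_normal_moment_abs[of 1]
    by (intro integrable_mult_right integrable_add) auto
  also have "(\<lambda>t. sqrt (2 * pi) *
      (std_normal_density t * \<bar>t\<bar> ^ 0 + std_normal_density t * \<bar>t\<bar> ^ 1)) = f"
    by (auto simp: f_def normal_density_def fun_eq_iff field_simps)
  finally have f_finite: "(\<integral>\<^sup>+t. ennreal (f t) \<partial>lborel) < \<infinity>"
    using f_nonneg by (simp add: integrable_iff_bounded)
  \<comment> \<open>\<open>norm x \<le> \<Prod>\<^sub>b (1 + \<bar>x \<bullet> b\<bar>)\<close> dominates the integrand by a product of one-dimensional functions.\<close>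
  have bound: "exp (- (norm x)\<^sup>2 / 2) * norm x \<le> (\<Prod>b\<in>Basis. f (x \<bullet> b))" for x :: 'a
  proof -
    have "(norm x)\<^sup>2 = (\<Sum>b\<in>Basis. (x \<bullet> b)\<^sup>2)"
      using euclidean_inner[of x x] by (simp add: power2_eq_square flip: power2_norm_eq_inner)
    then have exp_prod: "exp (- (norm x)\<^sup>2 / 2) = (\<Prod>b\<in>Basis. exp (- (x \<bullet> b)\<^sup>2 / 2))"
      by (simp add: exp_sum[symmetric] sum_negf sum_divide_distrib)
    have "norm x \<le> (\<Prod>b\<in>Basis. 1 + \<bar>x \<bullet> b\<bar>)"
      using norm_le_l1[of x] sum_le_prod[of Basis "\<lambda>b. \<bar>x \<bullet> b\<bar>"] by simp
    then show ?thesis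
      unfolding exp_prod f_def prod.distrib by (intro mult_left_mono prod_nonneg) auto
  qed
  have "(\<integral>\<^sup>+x. ennreal (norm (exp (- (norm x)\<^sup>2 / 2) * norm x)) \<partial>(lborel::'a measure))
      \<le> (\<integral>\<^sup>+x. (\<Prod>b\<in>Basis. ennreal (f (x \<bullet> b))) \<partial>(lborel::'a measure))"
    using bound f_nonneg by (intro nn_integral_mono) (simp add: prod_ennreal ennreal_leI)
  also have "\<dots> = (\<Prod>b\<in>(Basis::'a set). \<integral>\<^sup>+t. ennreal (f t) \<partial>lborel)"
    by (rule nn_integral_lborel_prod) (auto simp: f_def)
  also have "\<dots> < \<infinity>"
    using f_finite by (simp add: power_less_top_ennreal)
  finally show ?thesis
    by (intro integrableI_bounded) auto
qed

lemma integrable_std_gaussian_norm: "integrable std_gaussian norm"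
proof -
  define c where "c = (2 * pi) powr (- real DIM('a) / 2)"
  have "integrable lborel (\<lambda>x::'a. (c * exp (- (norm x)\<^sup>2 / 2)) *\<^sub>R norm x)"
    using integrable_mult_right[OF integrable_lborel_gaussian_norm, of c]
    by (simp add: mult.assoc)
  then show ?thesis
    unfolding std_gaussian_def c_def by (subst integrable_density) auto
qed

definition support_fun :: "'a::real_inner set \<Rightarrow> 'a \<Rightarrow> real" where
  "support_fun T x = (SUP t\<in>T. x \<bullet> t)"

lemma support_fun_upper:
  assumes "compact T" "t \<in> T"
  shows "x \<bullet> t \<le> support_fun T x"
proof -
  have "bounded ((\<bullet>) x ` T)"
    by (intro compact_imp_bounded compact_continuous_image assms continuous_intros)
  then show ?thesis
    unfolding support_fun_def using assms(2) by (intro cSUP_upper bounded_imp_bdd_above)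
qed

lemma support_fun_attained:
  assumes "compact T" "T \<noteq> {}"
  obtains t where "t \<in> T" "support_fun T x = x \<bullet> t"
proof -
  have "continuous_on T ((\<bullet>) x)"
    by (intro continuous_intros)
  then obtain t where t: "t \<in> T" "\<And>s. s \<in> T \<Longrightarrow> x \<bullet> s \<le> x \<bullet> t"
    using continuous_attains_sup[OF assms] by blast
  then have "support_fun T x = x \<bullet> t"
    unfolding support_fun_def by (intro cSup_eq_maximum) auto
  with t(1) show ?thesis by (rule that)
qed

lemma support_fun_mono:
  assumes "compact T'" "compact T" "T \<noteq> {}" "T \<subseteq> T'"
  shows "support_fun T x \<le> support_fun T' x"
proof -
  obtain t where "t \<in> T" "support_fun T x = x \<bullet> t"
    using support_fun_attained[OF assms(2,3)] .
  then show ?thesis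
    using support_fun_upper[OF assms(1), of t x] assms(4) by auto
qed

lemma support_fun_lipschitz:
  assumes "compact T" "T \<noteq> {}" "\<And>t. t \<in> T \<Longrightarrow> norm t \<le> R"
  shows "support_fun T x \<le> support_fun T y + R * norm (x - y)"
proof -
  obtain t where t: "t \<in> T" "support_fun T x = x \<bullet> t"
    using support_fun_attained[OF assms(1,2)] .
  have "x \<bullet> t = y \<bullet> t + (x - y) \<bullet> t"
    by (simp add: inner_diff_left)
  also have "(x - y) \<bullet> t \<le> norm (x - y) * norm t"
    by (rule norm_cauchy_schwarz)
  also have "\<dots> \<le> R * norm (x - y)"
    using mult_left_mono[OF assms(3)[OF t(1)] norm_ge_zero[of "x - y"]] by (simp add: mult.commute)
  also have "y \<bullet> t \<le> support_fun T y"
    using assms(1) t(1) by (rule support_fun_upper)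
  finally show ?thesis
    using t(2) by simp
qed

lemma integrable_support_fun:
  assumes "compact T" "T \<noteq> {}"
  shows "integrable std_gaussian (support_fun T)"
proof -
  obtain R where "0 < R" and R: "\<And>t. t \<in> T \<Longrightarrow> norm t \<le> R"
    using compact_imp_bounded[OF assms(1)] by (auto simp: bounded_pos)
  note lip = support_fun_lipschitz[OF assms R]
  have "R-lipschitz_on UNIV (support_fun T)"
  proof (rule lipschitz_onI)
    show "dist (support_fun T x) (support_fun T y) \<le> R * dist x y" for x y
      using lip[of x y] lip[of y x] by (simp add: dist_norm abs_le_iff norm_minus_commute)
  qed (use \<open>0 < R\<close> in simp)
  then have "support_fun T \<in> borel_measurable borel"
    by (intro borel_measurable_continuous_onI lipschitz_on_continuous_on)
  then have measurable: "support_fun T \<in> borel_measurable std_gaussian"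
    by (simp add: std_gaussian_def)
  have "support_fun T 0 = 0"
    using assms(2) by (simp add: support_fun_def)
  then have bound: "norm (support_fun T x) \<le> norm (R * norm x)" for x
    using lip[of x 0] lip[of 0 x] \<open>0 < R\<close> by simp
  show ?thesis
    using integrable_mult_right[OF integrable_std_gaussian_norm] measurable bound
    by (rule Bochner_Integration.integrable_bound[OF _ _ AE_I2])
qed

locale concave_profile =
  fixes g :: "real \<Rightarrow> real" and L :: real
  assumes concave: "concave_on {0..} g"
    and mono: "mono_on {0..} g"
    and lipschitz: "L-lipschitz_on {0..} g"
begin

text \<open>For \<open>g = local_gw K \<mu>\<close> this is \<open>eps_mu K \<mu>\<close>.  Being a choice term, it means something
  only where a maximiser exists, and it is determined only where the maximiser is unique.\<close>
abbreviation opt_radius :: "real \<Rightarrow> real" where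
  "opt_radius \<sigma> \<equiv> ARG_MAX (\<lambda>\<epsilon>. \<sigma> * g \<epsilon> - \<epsilon>\<^sup>2 / 2) \<epsilon>. \<epsilon> \<ge> 0"

lemma growth_bound:
  assumes "0 \<le> \<epsilon>"
  shows "g \<epsilon> \<le> g 0 + L * \<epsilon>"
  using lipschitz_onD[OF lipschitz, of \<epsilon> 0] assms by (simp add: dist_real_def)

lemma arg_max_exists:
  assumes "0 \<le> \<sigma>"
  shows "\<exists>\<epsilon>. is_arg_max (\<lambda>\<epsilon>. \<sigma> * g \<epsilon> - \<epsilon>\<^sup>2 / 2) (\<lambda>\<epsilon>. \<epsilon> \<ge> 0) \<epsilon>"
proof -
  define M where "M = 2 * \<sigma> * L"
  have "0 \<le> M"
    unfolding M_def using assms lipschitz_on_nonneg[OF lipschitz] by simp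
  have "continuous_on {0..M} g"
    using lipschitz_on_continuous_on[OF lipschitz] by (rule continuous_on_subset) auto
  then have "continuous_on {0..M} (\<lambda>\<epsilon>. \<sigma> * g \<epsilon> - \<epsilon>\<^sup>2 / 2)"
    by (intro continuous_intros) auto
  then have "\<exists>a\<in>{0..M}. \<forall>\<epsilon>\<in>{0..M}. \<sigma> * g \<epsilon> - \<epsilon>\<^sup>2 / 2 \<le> \<sigma> * g a - a\<^sup>2 / 2"
    using \<open>0 \<le> M\<close> by (intro continuous_attains_sup) auto
  then obtain a where a: "a \<in> {0..M}"
    and max: "\<And>\<epsilon>. \<epsilon> \<in> {0..M} \<Longrightarrow> \<sigma> * g \<epsilon> - \<epsilon>\<^sup>2 / 2 \<le> \<sigma> * g a - a\<^sup>2 / 2"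
    by blast
  \<comment> \<open>Beyond \<open>M\<close> the penalty \<open>\<epsilon>\<^sup>2 / 2\<close> outgrows the linear growth of \<open>\<sigma> * g\<close>.\<close>
  have "\<sigma> * g \<epsilon> - \<epsilon>\<^sup>2 / 2 \<le> \<sigma> * g a - a\<^sup>2 / 2" if "M < \<epsilon>" for \<epsilon>
  proof -
    have "0 \<le> \<epsilon>"
      using that \<open>0 \<le> M\<close> by simp
    have "\<sigma> * g \<epsilon> \<le> \<sigma> * (g 0 + L * \<epsilon>)"
      using mult_left_mono[OF growth_bound[OF \<open>0 \<le> \<epsilon>\<close>] assms] .
    also have "\<dots> = \<sigma> * g 0 + \<epsilon> * (\<sigma> * L)"
      by (simp add: algebra_simps)
    also have "\<epsilon> * (\<sigma> * L) \<le> \<epsilon>\<^sup>2 / 2"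
    proof -
      have "\<epsilon> * (2 * \<sigma> * L) \<le> \<epsilon> * \<epsilon>"
        using that \<open>0 \<le> \<epsilon>\<close> unfolding M_def by (intro mult_left_mono) auto
      then show ?thesis
        by (simp add: power2_eq_square field_simps)
    qed
    finally show ?thesis
      using max[of 0] \<open>0 \<le> M\<close> by simp
  qed
  then have "\<sigma> * g \<epsilon> - \<epsilon>\<^sup>2 / 2 \<le> \<sigma> * g a - a\<^sup>2 / 2" if "0 \<le> \<epsilon>" for \<epsilon>
    using max[of \<epsilon>] that by (cases "\<epsilon> \<le> M") auto
  with a have "is_arg_max (\<lambda>\<epsilon>. \<sigma> * g \<epsilon> - \<epsilon>\<^sup>2 / 2) (\<lambda>\<epsilon>. \<epsilon> \<ge> 0) a"
    by (simp add: is_arg_max_linorder)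
  then show ?thesis ..
qed

lemma arg_max_unique:
  assumes "0 \<le> \<sigma>"
    and "is_arg_max (\<lambda>\<epsilon>. \<sigma> * g \<epsilon> - \<epsilon>\<^sup>2 / 2) (\<lambda>\<epsilon>. \<epsilon> \<ge> 0) a"
    and "is_arg_max (\<lambda>\<epsilon>. \<sigma> * g \<epsilon> - \<epsilon>\<^sup>2 / 2) (\<lambda>\<epsilon>. \<epsilon> \<ge> 0) b"
  shows "a = b"
proof (rule ccontr)
  assume "a \<noteq> b"
  have "0 \<le> a" "0 \<le> b"
    using assms(2,3) by (auto simp: is_arg_max_def)
  define m where "m = (a + b) / 2"
  have "0 \<le> m"
    unfolding m_def using \<open>0 \<le> a\<close> \<open>0 \<le> b\<close> by simp
  have "(1 - 1/2) *\<^sub>R a + (1/2) *\<^sub>R b = m"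
    unfolding m_def by simp
  then have "(1 - 1/2) * g a + 1/2 * g b \<le> g m"
    using concave_onD[OF concave, of "1/2" a b] \<open>0 \<le> a\<close> \<open>0 \<le> b\<close> by simp
  from mult_left_mono[OF this assms(1)] have "\<sigma> * g a + \<sigma> * g b \<le> 2 * (\<sigma> * g m)"
    by (simp add: algebra_simps)
  moreover have "m\<^sup>2 < (a\<^sup>2 + b\<^sup>2) / 2"
  proof -
    have "(a\<^sup>2 + b\<^sup>2) / 2 - m\<^sup>2 = (a - b)\<^sup>2 / 4"
      unfolding m_def by (simp add: power2_eq_square field_simps)
    moreover have "0 < (a - b)\<^sup>2 / 4"
      using \<open>a \<noteq> b\<close> by simp
    ultimately show ?thesis
      by linarith
  qed
  moreover have "\<sigma> * g m - m\<^sup>2 / 2 \<le> \<sigma> * g a - a\<^sup>2 / 2" "\<sigma> * g m - m\<^sup>2 / 2 \<le> \<sigma> * g b - b\<^sup>2 / 2"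
    using assms(2,3) \<open>0 \<le> m\<close> by (auto simp: is_arg_max_linorder)
  ultimately show False
    by argo
qed

lemma opt_radius_is_arg_max:
  assumes "0 \<le> \<sigma>"
  shows "is_arg_max (\<lambda>\<epsilon>. \<sigma> * g \<epsilon> - \<epsilon>\<^sup>2 / 2) (\<lambda>\<epsilon>. \<epsilon> \<ge> 0) (opt_radius \<sigma>)"
  unfolding arg_max_def using arg_max_exists[OF assms] by (rule someI_ex)

lemma opt_radius_eqI:
  assumes "0 \<le> \<sigma>" "is_arg_max (\<lambda>\<epsilon>. \<sigma> * g \<epsilon> - \<epsilon>\<^sup>2 / 2) (\<lambda>\<epsilon>. \<epsilon> \<ge> 0) \<epsilon>"
  shows "opt_radius \<sigma> = \<epsilon>"
  using arg_max_unique[OF assms(1) opt_radius_is_arg_max[OF assms(1)] assms(2)] .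

lemma opt_radius_nonneg: "0 \<le> \<sigma> \<Longrightarrow> 0 \<le> opt_radius \<sigma>"
  using opt_radius_is_arg_max by (simp add: is_arg_max_def)

lemma opt_radius_le:
  assumes "0 \<le> \<sigma>"
  shows "opt_radius \<sigma> \<le> 2 * \<sigma> * L"
proof -
  define a where "a = opt_radius \<sigma>"
  have "0 \<le> a" "\<sigma> * g 0 \<le> \<sigma> * g a - a\<^sup>2 / 2"
    using opt_radius_is_arg_max[OF assms] unfolding a_def is_arg_max_linorder by auto
  moreover have "\<sigma> * g a \<le> \<sigma> * (g 0 + L * a)"
    using mult_left_mono[OF growth_bound[OF \<open>0 \<le> a\<close>] assms] .
  ultimately have "a * a \<le> a * (2 * \<sigma> * L)"
    by (simp add: power2_eq_square algebra_simps)
  then show ?thesis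
    unfolding a_def[symmetric] using \<open>0 \<le> a\<close>
    by (cases "a = 0") (auto simp: assms lipschitz_on_nonneg[OF lipschitz])
qed

lemma opt_radius_zero: "opt_radius 0 = 0"
  using opt_radius_nonneg[of 0] opt_radius_le[of 0] by simp

lemma opt_radius_mono:
  assumes "0 \<le> \<sigma>" "\<sigma> \<le> \<tau>"
  shows "opt_radius \<sigma> \<le> opt_radius \<tau>"
proof (rule is_arg_max_le_if_increasing_differences)
  show "is_arg_max (\<lambda>\<epsilon>. \<sigma> * g \<epsilon> - \<epsilon>\<^sup>2 / 2) (\<lambda>\<epsilon>. \<epsilon> \<ge> 0) (opt_radius \<sigma>)"
    "is_arg_max (\<lambda>\<epsilon>. \<tau> * g \<epsilon> - \<epsilon>\<^sup>2 / 2) (\<lambda>\<epsilon>. \<epsilon> \<ge> 0) (opt_radius \<tau>)"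
    using assms by (auto intro: opt_radius_is_arg_max)
  show "\<epsilon> = opt_radius \<sigma>" if "is_arg_max (\<lambda>\<epsilon>. \<sigma> * g \<epsilon> - \<epsilon>\<^sup>2 / 2) (\<lambda>\<epsilon>. \<epsilon> \<ge> 0) \<epsilon>" for \<epsilon>
    using opt_radius_eqI[OF assms(1) that] ..
  fix x y :: real
  assume "0 \<le> x" "0 \<le> y" "x \<le> y"
  then have "0 \<le> (\<tau> - \<sigma>) * (g y - g x)"
    using assms(2) mono_onD[OF mono, of x y] by simp
  then show "(\<sigma> * g y - y\<^sup>2 / 2) - (\<sigma> * g x - x\<^sup>2 / 2) \<le> (\<tau> * g y - y\<^sup>2 / 2) - (\<tau> * g x - x\<^sup>2 / 2)"
    by (simp add: algebra_simps)
qed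

lemma rescaled_arg_max_iff:
  assumes "0 < \<sigma>"
  shows "is_arg_max (\<lambda>t. g (\<sigma> * t) / \<sigma> - t\<^sup>2 / 2) (\<lambda>t. t \<ge> 0) t
    \<longleftrightarrow> is_arg_max (\<lambda>\<epsilon>. \<sigma> * g \<epsilon> - \<epsilon>\<^sup>2 / 2) (\<lambda>\<epsilon>. \<epsilon> \<ge> 0) (\<sigma> * t)"
proof -
  define h where "h t = g (\<sigma> * t) / \<sigma> - t\<^sup>2 / 2" for t
  have objective_eq: "\<sigma> * g \<epsilon> - \<epsilon>\<^sup>2 / 2 = \<sigma>\<^sup>2 * h (\<epsilon> / \<sigma>)" for \<epsilon>
    using assms unfolding h_def by (simp add: power2_eq_square field_simps)
  have "(\<forall>\<epsilon>\<ge>0. h (\<epsilon> / \<sigma>) \<le> h t) \<longleftrightarrow> (\<forall>y\<ge>0. h y \<le> h t)"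
  proof
    show "\<forall>y\<ge>0. h y \<le> h t" if "\<forall>\<epsilon>\<ge>0. h (\<epsilon> / \<sigma>) \<le> h t"
      using that[rule_format, of "\<sigma> * _"] assms by simp
  qed (use assms in simp)
  then show ?thesis
    unfolding is_arg_max_linorder objective_eq h_def[symmetric] using assms
    by (simp add: zero_le_mult_iff)
qed

lemma opt_radius_div_antimono:
  assumes "0 < \<sigma>" "\<sigma> \<le> \<tau>"
  shows "opt_radius \<tau> / \<tau> \<le> opt_radius \<sigma> / \<sigma>"
proof (rule is_arg_max_le_if_increasing_differences
    [where f = "\<lambda>t. g (\<tau> * t) / \<tau> - t\<^sup>2 / 2" and h = "\<lambda>t. g (\<sigma> * t) / \<sigma> - t\<^sup>2 / 2"])
  have "0 < \<tau>"
    using assms by simp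
  show "is_arg_max (\<lambda>t. g (\<tau> * t) / \<tau> - t\<^sup>2 / 2) (\<lambda>t. t \<ge> 0) (opt_radius \<tau> / \<tau>)"
    "is_arg_max (\<lambda>t. g (\<sigma> * t) / \<sigma> - t\<^sup>2 / 2) (\<lambda>t. t \<ge> 0) (opt_radius \<sigma> / \<sigma>)"
    using assms \<open>0 < \<tau>\<close> by (simp_all add: rescaled_arg_max_iff opt_radius_is_arg_max)
  show "x = opt_radius \<tau> / \<tau>"
    if "is_arg_max (\<lambda>t. g (\<tau> * t) / \<tau> - t\<^sup>2 / 2) (\<lambda>t. t \<ge> 0) x" for x
    using opt_radius_eqI[of \<tau> "\<tau> * x"] that \<open>0 < \<tau>\<close> by (simp add: rescaled_arg_max_iff)
  \<comment> \<open>The rescaled objective has decreasing differences in \<open>\<sigma>\<close>: chord slopes of the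
    concave \<open>g\<close> decrease as the chord moves right.\<close>
  fix x y :: real
  assume xy: "0 \<le> x" "0 \<le> y" "x \<le> y"
  show "(g (\<tau> * y) / \<tau> - y\<^sup>2 / 2) - (g (\<tau> * x) / \<tau> - x\<^sup>2 / 2)
    \<le> (g (\<sigma> * y) / \<sigma> - y\<^sup>2 / 2) - (g (\<sigma> * x) / \<sigma> - x\<^sup>2 / 2)"
  proof (cases "x = y")
    case False
    with xy have "x < y"
      by simp
    have slopes: "(g (\<tau> * y) - g (\<tau> * x)) / (\<tau> * y - \<tau> * x)
        \<le> (g (\<sigma> * y) - g (\<sigma> * x)) / (\<sigma> * y - \<sigma> * x)"
      using xy \<open>x < y\<close> assms \<open>0 < \<tau>\<close>
      by (intro concave_on_slope_antimono[OF concave]) (auto intro: mult_right_mono)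
    have chord: "(g (s * y) - g (s * x)) / (s * y - s * x) * (y - x) = (g (s * y) - g (s * x)) / s"
      if "0 < s" for s
      using that \<open>x < y\<close> by (simp add: field_simps)
    from mult_right_mono[OF slopes, of "y - x"]
    have "(g (\<tau> * y) - g (\<tau> * x)) / \<tau> \<le> (g (\<sigma> * y) - g (\<sigma> * x)) / \<sigma>"
      unfolding chord[OF \<open>0 < \<tau>\<close>] chord[OF assms(1)] using \<open>x < y\<close> by simp
    then show ?thesis
      unfolding diff_divide_distrib by linarith
  qed simp
qed

lemma opt_radius_mult_le:
  assumes "0 \<le> \<sigma>" "1 \<le> c"
  shows "opt_radius (c * \<sigma>) \<le> c * opt_radius \<sigma>"
proof (cases "\<sigma> = 0")
  case False
  with assms have "0 < \<sigma>" "\<sigma> \<le> c * \<sigma>"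
    by simp_all
  then have "opt_radius (c * \<sigma>) / (c * \<sigma>) \<le> opt_radius \<sigma> / \<sigma>"
    by (rule opt_radius_div_antimono)
  with \<open>0 < \<sigma>\<close> assms(2) show ?thesis
    by (simp add: field_simps)
next
  case True
  then show ?thesis
    unfolding True mult_zero_right opt_radius_zero by simp
qed

end

lemma compact_cball_Int:
  fixes K :: "'a::heine_borel set"
  assumes "closed K" shows "compact (cball \<mu> \<epsilon> \<inter> K)"
  using assms by (intro compact_Int_closed) auto

lemma cball_Int_nonempty:
  fixes K :: "'a::metric_space set"
  assumes "\<mu> \<in> K" "0 \<le> \<epsilon>" shows "cball \<mu> \<epsilon> \<inter> K \<noteq> {}"
  using assms centre_in_cball[of \<mu> \<epsilon>] by blast

lemma convex_combination_in_cball_Int: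
  fixes K :: "'a::real_normed_vector set"
  assumes "convex K" "s \<in> cball \<mu> a \<inter> K" "t \<in> cball \<mu> b \<inter> K"
    and "0 \<le> u" "0 \<le> v" "u + v = 1"
  shows "u *\<^sub>R s + v *\<^sub>R t \<in> cball \<mu> (u * a + v * b) \<inter> K"
proof -
  have "dist \<mu> (u *\<^sub>R s + v *\<^sub>R t) = norm (u *\<^sub>R (\<mu> - s) + v *\<^sub>R (\<mu> - t))"
    using assms(6) by (simp add: dist_norm algebra_simps flip: scaleR_add_left)
  also have "\<dots> \<le> u * dist \<mu> s + v * dist \<mu> t"
    using norm_triangle_ineq[of "u *\<^sub>R (\<mu> - s)" "v *\<^sub>R (\<mu> - t)"] assms(4,5)
    by (simp add: dist_norm)
  also have "\<dots> \<le> u * a + v * b"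
    using assms(2-5) by (intro add_mono mult_left_mono) auto
  finally show ?thesis
    using assms by (auto intro: convexD)
qed

lemma shrink_into_cball_Int:
  fixes K :: "'a::real_normed_vector set"
  assumes "convex K" "\<mu> \<in> K" "0 \<le> a" "a \<le> b" "s \<in> cball \<mu> b \<inter> K"
  obtains s' where "s' \<in> cball \<mu> a \<inter> K" "norm (s - s') \<le> b - a"
proof (cases "b = 0")
  case True
  then show ?thesis
    using assms that[of s] by auto
next
  case False
  define r where "r = a / b"
  have r: "0 \<le> r" "r \<le> 1" "r * b = a"
    using assms False by (auto simp: r_def)
  define s' where "s' = (1 - r) *\<^sub>R \<mu> + r *\<^sub>R s"
  have dist_s: "dist \<mu> s \<le> b"
    using assms(5) by simp
  have "s' \<in> K"
    unfolding s'_def using assms r by (intro convexD) auto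
  moreover have "\<mu> - s' = r *\<^sub>R (\<mu> - s)" "s - s' = (1 - r) *\<^sub>R (s - \<mu>)"
    unfolding s'_def by (simp_all add: algebra_simps)
  then have "dist \<mu> s' = r * dist \<mu> s" "norm (s - s') = (1 - r) * dist \<mu> s"
    using r by (simp_all add: dist_norm norm_minus_commute)
  ultimately show ?thesis
    using that[of s'] r dist_s mult_left_mono[OF dist_s, of r] mult_left_mono[OF dist_s, of "1 - r"]
    by (auto simp: algebra_simps)
qed

lemma support_fun_cball_Int_concave:
  fixes K :: "'a::euclidean_space set"
  assumes "closed K" "convex K" "\<mu> \<in> K" "0 \<le> a" "0 \<le> b" "0 \<le> u" "0 \<le> v" "u + v = 1"
  shows "u * support_fun (cball \<mu> a \<inter> K) x + v * support_fun (cball \<mu> b \<inter> K) x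
    \<le> support_fun (cball \<mu> (u * a + v * b) \<inter> K) x"
proof -
  obtain s where s: "s \<in> cball \<mu> a \<inter> K" "support_fun (cball \<mu> a \<inter> K) x = x \<bullet> s"
    using support_fun_attained[OF compact_cball_Int cball_Int_nonempty, OF assms(1,3,4)] .
  obtain t where t: "t \<in> cball \<mu> b \<inter> K" "support_fun (cball \<mu> b \<inter> K) x = x \<bullet> t"
    using support_fun_attained[OF compact_cball_Int cball_Int_nonempty, OF assms(1,3,5)] .
  have "u * support_fun (cball \<mu> a \<inter> K) x + v * support_fun (cball \<mu> b \<inter> K) x
      = x \<bullet> (u *\<^sub>R s + v *\<^sub>R t)"
    using s t by (simp add: inner_add_right)
  also have "\<dots> \<le> support_fun (cball \<mu> (u * a + v * b) \<inter> K) x"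
    using assms s t
    by (intro support_fun_upper compact_cball_Int convex_combination_in_cball_Int) auto
  finally show ?thesis .
qed

lemma support_fun_cball_Int_radius_lipschitz:
  fixes K :: "'a::euclidean_space set"
  assumes "closed K" "convex K" "\<mu> \<in> K" "0 \<le> a" "a \<le> b"
  shows "support_fun (cball \<mu> b \<inter> K) x \<le> support_fun (cball \<mu> a \<inter> K) x + (b - a) * norm x"
proof -
  have "0 \<le> b"
    using assms(4,5) by simp
  obtain s where s: "s \<in> cball \<mu> b \<inter> K" "support_fun (cball \<mu> b \<inter> K) x = x \<bullet> s"
    using support_fun_attained[OF compact_cball_Int cball_Int_nonempty, OF assms(1,3) \<open>0 \<le> b\<close>] .
  obtain s' where s': "s' \<in> cball \<mu> a \<inter> K" "norm (s - s') \<le> b - a"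
    using shrink_into_cball_Int[OF assms(2,3,4,5) s(1)] .
  have "x \<bullet> s = x \<bullet> s' + x \<bullet> (s - s')"
    by (simp add: inner_diff_right)
  also have "x \<bullet> (s - s') \<le> norm x * norm (s - s')"
    by (rule norm_cauchy_schwarz)
  also have "\<dots> \<le> (b - a) * norm x"
    using mult_left_mono[OF s'(2) norm_ge_zero[of x]] by (simp add: mult.commute)
  also have "x \<bullet> s' \<le> support_fun (cball \<mu> a \<inter> K) x"
    using assms s' by (intro support_fun_upper compact_cball_Int) auto
  finally show ?thesis
    using s(2) by simp
qed

lemma local_gw_eq_integral_support_fun:
  "local_gw K \<mu> \<epsilon> = integral\<^sup>L std_gaussian (support_fun (cball \<mu> \<epsilon> \<inter> K))"
  unfolding local_gw_def support_fun_def ..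

lemma integrable_support_fun_cball_Int:
  assumes "closed K" "\<mu> \<in> K" "0 \<le> \<epsilon>"
  shows "integrable std_gaussian (support_fun (cball \<mu> \<epsilon> \<inter> K))"
  using assms by (intro integrable_support_fun compact_cball_Int cball_Int_nonempty)

lemma local_gw_mono:
  assumes "closed K" "\<mu> \<in> K"
  shows "mono_on {0..} (local_gw K \<mu>)"
proof (rule mono_onI)
  fix a b :: real
  assume "a \<in> {0..}" "b \<in> {0..}" "a \<le> b"
  with assms show "local_gw K \<mu> a \<le> local_gw K \<mu> b"
    unfolding local_gw_eq_integral_support_fun
    by (intro integral_mono integrable_support_fun_cball_Int support_fun_mono
        compact_cball_Int cball_Int_nonempty) auto
qed

lemma local_gw_concave:
  assumes "closed K" "convex K" "\<mu> \<in> K"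
  shows "concave_on {0..} (local_gw K \<mu>)"
  unfolding concave_on_iff
proof (intro conjI ballI allI impI)
  fix a b u v :: real
  assume ab: "a \<in> {0..}" "b \<in> {0..}" and uv: "0 \<le> u" "0 \<le> v" "u + v = 1"
  have "u * local_gw K \<mu> a + v * local_gw K \<mu> b
      = integral\<^sup>L std_gaussian (\<lambda>x. u * support_fun (cball \<mu> a \<inter> K) x
          + v * support_fun (cball \<mu> b \<inter> K) x)"
    unfolding local_gw_eq_integral_support_fun
    using assms ab by (simp add: integrable_support_fun_cball_Int)
  also have "\<dots> \<le> local_gw K \<mu> (u * a + v * b)"
    unfolding local_gw_eq_integral_support_fun using assms ab uv
    by (intro integral_mono integrable_support_fun_cball_Int support_fun_cball_Int_concave
        Bochner_Integration.integrable_add integrable_mult_right) auto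
  finally show "u * local_gw K \<mu> a + v * local_gw K \<mu> b \<le> local_gw K \<mu> (u *\<^sub>R a + v *\<^sub>R b)"
    by simp
qed simp

lemma local_gw_lipschitz:
  fixes K :: "'a::euclidean_space set"
  assumes "closed K" "convex K" "\<mu> \<in> K"
  shows "(integral\<^sup>L (std_gaussian :: 'a measure) norm)-lipschitz_on {0..} (local_gw K \<mu>)"
proof (rule lipschitz_on_monoI)
  fix a b :: real
  assume "a \<in> {0..}" "b \<in> {0..}" "a \<le> b"
  then have ab: "0 \<le> a" "0 \<le> b" "a \<le> b"
    by auto
  have "local_gw K \<mu> b \<le> integral\<^sup>L std_gaussian
      (\<lambda>x. support_fun (cball \<mu> a \<inter> K) x + (b - a) * norm x)"
    unfolding local_gw_eq_integral_support_fun using assms ab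
    by (intro integral_mono integrable_support_fun_cball_Int
        support_fun_cball_Int_radius_lipschitz Bochner_Integration.integrable_add
        integrable_mult_right integrable_std_gaussian_norm)
  also have "\<dots> = local_gw K \<mu> a + (b - a) * integral\<^sup>L (std_gaussian :: 'a measure) norm"
    unfolding local_gw_eq_integral_support_fun using assms ab
    by (simp add: integrable_support_fun_cball_Int integrable_std_gaussian_norm)
  finally show "local_gw K \<mu> b \<le> local_gw K \<mu> a + (b - a) * integral\<^sup>L (std_gaussian :: 'a measure) norm" .
qed (use assms local_gw_mono in auto)

lemma concave_profile_local_gw:
  fixes K :: "'a::euclidean_space set"
  assumes "closed K" "convex K" "\<mu> \<in> K"
  shows "concave_profile (local_gw K \<mu>) (integral\<^sup>L (std_gaussian :: 'a measure) norm)"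
  using assms by unfold_locales (auto intro: local_gw_concave local_gw_mono local_gw_lipschitz)

lemma eps_mu_bounds:
  fixes K :: "'a::euclidean_space set"
  assumes "closed K" "convex K" "\<mu> \<in> K" "0 \<le> \<sigma>"
  shows "0 \<le> eps_mu K \<mu> \<sigma>" "eps_mu K \<mu> \<sigma> \<le> 2 * \<sigma> * integral\<^sup>L (std_gaussian :: 'a measure) norm"
proof -
  interpret concave_profile "local_gw K \<mu>" "integral\<^sup>L (std_gaussian :: 'a measure) norm"
    using assms(1-3) by (rule concave_profile_local_gw)
  show "0 \<le> eps_mu K \<mu> \<sigma>" "eps_mu K \<mu> \<sigma> \<le> 2 * \<sigma> * integral\<^sup>L (std_gaussian :: 'a measure) norm"
    unfolding eps_mu_def using assms(4) by (rule opt_radius_nonneg, rule opt_radius_le)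
qed

lemma eps_mu_mono:
  fixes K :: "'a::euclidean_space set"
  assumes "closed K" "convex K" "\<mu> \<in> K" "0 \<le> \<sigma>" "\<sigma> \<le> \<tau>"
  shows "eps_mu K \<mu> \<sigma> \<le> eps_mu K \<mu> \<tau>"
proof -
  interpret concave_profile "local_gw K \<mu>" "integral\<^sup>L (std_gaussian :: 'a measure) norm"
    using assms(1-3) by (rule concave_profile_local_gw)
  show ?thesis
    unfolding eps_mu_def using assms(4,5) by (rule opt_radius_mono)
qed

lemma eps_mu_mult_le:
  fixes K :: "'a::euclidean_space set"
  assumes "closed K" "convex K" "\<mu> \<in> K" "0 \<le> \<sigma>" "1 \<le> c"
  shows "eps_mu K \<mu> (c * \<sigma>) \<le> c * eps_mu K \<mu> \<sigma>"
proof -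
  interpret concave_profile "local_gw K \<mu>" "integral\<^sup>L (std_gaussian :: 'a measure) norm"
    using assms(1-3) by (rule concave_profile_local_gw)
  show ?thesis
    unfolding eps_mu_def using assms(4,5) by (rule opt_radius_mult_le)
qed

lemma bdd_above_eps_mu:
  assumes "closed K" "convex K" "0 \<le> \<sigma>"
  shows "bdd_above ((\<lambda>\<mu>. eps_mu K \<mu> \<sigma>) ` K)"
  using eps_mu_bounds(2)[OF assms(1,2) _ assms(3)] by (intro bdd_aboveI2) blast

lemma eps_bar_nonneg:
  assumes "closed K" "convex K" "K \<noteq> {}" "0 \<le> \<sigma>"
  shows "0 \<le> eps_bar K \<sigma>"
proof -
  obtain \<mu> where "\<mu> \<in> K"
    using assms(3) by blast
  with assms show ?thesis
    unfolding eps_bar_def by (intro cSUP_upper2[OF bdd_above_eps_mu] eps_mu_bounds(1))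
qed

lemma eps_bar_mono:
  assumes "closed K" "convex K" "K \<noteq> {}"
  shows "mono_on {0..} (eps_bar K)"
proof (rule mono_onI)
  fix \<sigma> \<tau> :: real
  assume "\<sigma> \<in> {0..}" "\<tau> \<in> {0..}" "\<sigma> \<le> \<tau>"
  with assms have "eps_mu K \<mu> \<sigma> \<le> eps_mu K \<mu> \<tau>" if "\<mu> \<in> K" for \<mu>
    using that by (intro eps_mu_mono) auto
  then show "eps_bar K \<sigma> \<le> eps_bar K \<tau>"
    unfolding eps_bar_def using \<open>\<tau> \<in> {0..}\<close>
    by (intro cSUP_mono[OF assms(3) bdd_above_eps_mu[OF assms(1,2)]]) auto
qed

lemma eps_bar_mult_le:
  assumes "closed K" "convex K" "K \<noteq> {}" "0 \<le> \<sigma>" "1 \<le> c"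
  shows "eps_bar K (c * \<sigma>) \<le> c * eps_bar K \<sigma>"
  unfolding eps_bar_def
proof (rule cSUP_least)
  fix \<mu> assume "\<mu> \<in> K"
  have "eps_mu K \<mu> (c * \<sigma>) \<le> c * eps_mu K \<mu> \<sigma>"
    using assms \<open>\<mu> \<in> K\<close> by (intro eps_mu_mult_le) auto
  also have "\<dots> \<le> c * (SUP \<mu>\<in>K. eps_mu K \<mu> \<sigma>)"
    using assms \<open>\<mu> \<in> K\<close> by (intro mult_left_mono cSUP_upper bdd_above_eps_mu) auto
  finally show "eps_mu K \<mu> (c * \<sigma>) \<le> c * (SUP \<mu>\<in>K. eps_mu K \<mu> \<sigma>)" .
qed (rule assms(3))

theorem mainTheorem20:
  fixes K :: "'a::euclidean_space set"
  assumes "closed K" and "convex K" and "K \<noteq> {}"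
  shows "mono_on {0..} (eps_bar K) \<and>
    (\<forall>\<sigma> c. \<sigma> \<ge> 0 \<longrightarrow> c \<ge> 1 \<longrightarrow>
       eps_bar K \<sigma> \<le> eps_bar K (c * \<sigma>) \<and> eps_bar K (c * \<sigma>) \<le> c * eps_bar K \<sigma>) \<and>
    (\<forall>\<sigma> c. \<sigma> \<ge> 0 \<longrightarrow> 0 \<le> c \<longrightarrow> c < 1 \<longrightarrow>
       c * eps_bar K \<sigma> \<le> eps_bar K (c * \<sigma>) \<and> eps_bar K (c * \<sigma>) \<le> eps_bar K \<sigma>)"
proof (intro conjI allI impI)
  note mono = eps_bar_mono[OF assms]
  show "mono_on {0..} (eps_bar K)"
    by (fact mono)
  fix \<sigma> c :: real
  assume "0 \<le> \<sigma>"
  show "eps_bar K \<sigma> \<le> eps_bar K (c * \<sigma>)" if "1 \<le> c"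
    using mono_onD[OF mono] \<open>0 \<le> \<sigma>\<close> that by (simp add: mult_le_cancel_right1)
  show "eps_bar K (c * \<sigma>) \<le> c * eps_bar K \<sigma>" if "1 \<le> c"
    using eps_bar_mult_le[OF assms \<open>0 \<le> \<sigma>\<close> that] .
  show "eps_bar K (c * \<sigma>) \<le> eps_bar K \<sigma>" if "0 \<le> c" "c < 1"
    using mono_onD[OF mono] mult_left_le_one_le[OF \<open>0 \<le> \<sigma>\<close>] \<open>0 \<le> \<sigma>\<close> that by simp
  show "c * eps_bar K \<sigma> \<le> eps_bar K (c * \<sigma>)" if "0 \<le> c" "c < 1"
  proof (cases "c = 0")
    case False
    with that \<open>0 \<le> \<sigma>\<close> have "eps_bar K ((1 / c) * (c * \<sigma>)) \<le> (1 / c) * eps_bar K (c * \<sigma>)"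
      by (intro eps_bar_mult_le[OF assms]) simp_all
    with False that show ?thesis
      by (simp add: field_simps)
  qed (use eps_bar_nonneg[OF assms] in simp)
qed

end
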